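(* Let $(\mathtt V_k,\mathcal F_k)$ be a nonnegative adapted sequence satisfying, almost surely for all $k$, $$\mathbb E[\mathtt V_k|\mathcal F_{k-1}]\le\Big(1-\frac ak+\gamma_k\Big)\mathtt V_{k-1}+\frac{C}{k^b},$$ where $a>0$, $b>1$, $C>0$ are constants and $(\gamma_k)$ is a nonnegative deterministic sequence with $\sum_k\gamma_k<\infty$. Then almost surely $\mathtt V_k=O(k^{-a})$ if $b-a>1$, and $\mathtt V_k=O\big((\ln k)^2/k^{b-1}\big)$ if $b-a\le1$. *)

theory Defs
  imports "HOL-Probability.Probability" "HOL-Library.Landau_Symbols"
begin

end

theory Submission
  imports Defs
begin

(* Choose weights rho_k > 0 with rho_k (1 - a/k + gamma_k) <= rho_(k-1) exp eps_k, where
   sum eps_k < oo, and with sum rho_k C / k^b < oo.  With c_k = rho_k exp (-(eps_1 + ... + eps_k)),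
   the process c_k V_k + sum_(j>k) c_j C / j^b is a nonnegative supermartingale, hence almost surely
   bounded by Doob's maximal inequality; so V_k = O(1 / rho_k) almost surely.
   The weights rho_k = k^a work if b - a > 1; if b - a <= 1 the weights rho_k = k^(b-1) / (ln k)^2 work,
   the series sum rho_k / k^b then being the convergent Bertrand series sum 1 / (k (ln k)^2). *)

section \<open>Maximal inequality for nonnegative supermartingales\<close>

lemma (in finite_measure) markov_split_set_integral:
  fixes f :: "'a \<Rightarrow> real"
  assumes S: "S \<in> sets M" and f: "integrable M f"
  shows "lam * measure M {x\<in>S. lam \<le> f x} + (\<integral>x\<in>{x\<in>S. f x < lam}. f x \<partial>M)
    \<le> (\<integral>x\<in>S. f x \<partial>M)"
proof -
  have [measurable]: "f \<in> borel_measurable M" using f by simp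
  define D where "D = {x\<in>S. lam \<le> f x}"
  have D: "D \<in> sets M" unfolding D_def using S by measurable
  have R: "{x\<in>S. f x < lam} \<in> sets M" using S by measurable
  have split: "S = D \<union> {x\<in>S. f x < lam}" by (auto simp: D_def)
  have "lam * measure M D = (\<integral>x\<in>D. lam \<partial>M)"
    using D by (simp add: set_integral_const)
  also have "\<dots> \<le> (\<integral>x\<in>D. f x \<partial>M)"
    using D f by (intro set_integral_mono integrable_mult_indicator[folded set_integrable_def])
      (auto simp: D_def)
  finally have "lam * measure M D + (\<integral>x\<in>{x\<in>S. f x < lam}. f x \<partial>M)
      \<le> (\<integral>x\<in>D. f x \<partial>M) + (\<integral>x\<in>{x\<in>S. f x < lam}. f x \<partial>M)" by simp
  also have "\<dots> = (\<integral>x\<in>D \<union> {x\<in>S. f x < lam}. f x \<partial>M)"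
    using D R f by (intro set_integral_Un[symmetric])
      (auto simp: D_def intro!: integrable_mult_indicator[folded set_integrable_def])
  also have "\<dots> = (\<integral>x\<in>S. f x \<partial>M)" using split by simp
  finally show ?thesis unfolding D_def .
qed

locale nonneg_supermartingale = prob_space M for M :: "'a measure" +
  fixes G :: "nat \<Rightarrow> 'a measure" and U :: "nat \<Rightarrow> 'a \<Rightarrow> real"
  assumes subalg: "subalgebra M (G n)"
    and filtration: "sets (G n) \<subseteq> sets (G (Suc n))"
    and adapted: "U n \<in> borel_measurable (G n)"
    and integrable: "integrable M (U n)"
    and nonneg: "x \<in> space M \<Longrightarrow> 0 \<le> U n x"
    \<comment> \<open>the integral form of \<open>E[U (Suc n) | G n] \<le> U n\<close>\<close>
    and supermartingale: "A \<in> sets (G n) \<Longrightarrow> (\<integral>x\<in>A. U (Suc n) x \<partial>M) \<le> (\<integral>x\<in>A. U n x \<partial>M)"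
begin

lemma space_G: "space (G n) = space M"
  using subalg by (simp add: subalgebra_def)

lemma sets_G_mono: "j \<le> n \<Longrightarrow> sets (G j) \<subseteq> sets (G n)"
  by (induction n rule: dec_induct) (use filtration in blast)+

lemma measurable_G:
  assumes "j \<le> n" shows "U j \<in> borel_measurable (G n)"
proof -
  have "borel_measurable (G j) \<subseteq> borel_measurable (G n)"
    by (rule measurable_mono) (simp_all add: sets_G_mono[OF assms] space_G)
  then show ?thesis using adapted by blast
qed

lemma borel_measurable_U [measurable]: "U n \<in> borel_measurable M"
  using integrable by simp

lemma maximal_ineq_upto:
  "lam * measure M {x\<in>space M. \<exists>j\<le>n. lam \<le> U j x}
     + (\<integral>x\<in>{x\<in>space M. \<forall>j\<le>n. U j x < lam}. U n x \<partial>M) \<le> (\<integral>x. U 0 x \<partial>M)"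
proof (induction n)
  case 0
  have "lam * measure M {x\<in>space M. lam \<le> U 0 x} + (\<integral>x\<in>{x\<in>space M. U 0 x < lam}. U 0 x \<partial>M)
      \<le> (\<integral>x\<in>space M. U 0 x \<partial>M)"
    by (rule markov_split_set_integral[OF sets.top integrable])
  then show ?case by (simp add: set_integral_space integrable)
next
  case (Suc n)
  define S where "S = {x\<in>space M. \<forall>j\<le>n. U j x < lam}"
  have "S = (\<Inter>j\<le>n. {x\<in>space (G n). U j x < lam})"
    by (auto simp: S_def space_G)
  also have "\<dots> \<in> sets (G n)"
  proof (intro sets.finite_INT)
    fix j assume "j \<in> {..n}"
    then have [measurable]: "U j \<in> borel_measurable (G n)" by (simp add: measurable_G)
    show "{x\<in>space (G n). U j x < lam} \<in> sets (G n)" by measurable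
  qed auto
  finally have S: "S \<in> sets (G n)" .
  then have S_M: "S \<in> sets M" using subalg by (auto simp: subalgebra_def)
  from markov_split_set_integral[OF S_M integrable, of lam "Suc n"]
  have step: "lam * measure M {x\<in>S. lam \<le> U (Suc n) x} + (\<integral>x\<in>{x\<in>S. U (Suc n) x < lam}. U (Suc n) x \<partial>M)
      \<le> (\<integral>x\<in>S. U n x \<partial>M)"
    using supermartingale[OF S] by linarith
  have "measure M {x\<in>space M. \<exists>j\<le>Suc n. lam \<le> U j x}
      = measure M {x\<in>space M. \<exists>j\<le>n. lam \<le> U j x} + measure M {x\<in>S. lam \<le> U (Suc n) x}"
  proof -
    have "{x\<in>space M. \<exists>j\<le>Suc n. lam \<le> U j x}
        = {x\<in>space M. \<exists>j\<le>n. lam \<le> U j x} \<union> {x\<in>S. lam \<le> U (Suc n) x}"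
      by (auto simp: S_def le_Suc_eq not_less)
    moreover have "{x\<in>space M. \<exists>j\<le>n. lam \<le> U j x} \<inter> {x\<in>S. lam \<le> U (Suc n) x} = {}"
      by (auto simp: S_def not_less)
    moreover have "{x\<in>space M. \<exists>j\<le>n. lam \<le> U j x} \<in> sets M"
      "{x\<in>S. lam \<le> U (Suc n) x} \<in> sets M"
      using S_M by measurable
    ultimately show ?thesis by (simp add: finite_measure_Union)
  qed
  moreover have "{x\<in>space M. \<forall>j\<le>Suc n. U j x < lam} = {x\<in>S. U (Suc n) x < lam}"
    by (auto simp: S_def le_Suc_eq)
  ultimately show ?case
    using Suc.IH step unfolding S_def by (simp add: algebra_simps)
qed

lemma maximal_ineq:
  "lam * measure M {x\<in>space M. \<exists>j. lam \<le> U j x} \<le> (\<integral>x. U 0 x \<partial>M)"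
proof -
  define B where "B n = {x\<in>space M. \<exists>j\<le>n. lam \<le> U j x}" for n
  have "lam * measure M (B n) \<le> (\<integral>x. U 0 x \<partial>M)" for n
  proof -
    have "0 \<le> (\<integral>x\<in>{x\<in>space M. \<forall>j\<le>n. U j x < lam}. U n x \<partial>M)"
      unfolding set_lebesgue_integral_def
      by (intro integral_nonneg_AE) (auto simp: nonneg indicator_def)
    then show ?thesis using maximal_ineq_upto[of lam n] unfolding B_def by linarith
  qed
  moreover have "(\<lambda>n. measure M (B n)) \<longlonglongrightarrow> measure M (\<Union>n. B n)"
    using integrable by (intro finite_Lim_measure_incseq) (auto simp: B_def incseq_def intro: le_trans)
  ultimately have "lam * measure M (\<Union>n. B n) \<le> (\<integral>x. U 0 x \<partial>M)"
    by (intro LIMSEQ_le_const2[OF tendsto_mult[OF tendsto_const]]) auto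
  moreover have "(\<Union>n. B n) = {x\<in>space M. \<exists>j. lam \<le> U j x}"
    by (auto simp: B_def)
  ultimately show ?thesis by simp
qed

lemma AE_bounded: "AE x in M. \<exists>B. \<forall>n. U n x \<le> B"
proof -
  define N where "N = (\<Inter>m. {x\<in>space M. \<exists>j. real m \<le> U j x})"
  have N: "N \<in> sets M" unfolding N_def using integrable by measurable
  have "measure M N \<le> (\<integral>x. U 0 x \<partial>M) / real m" if "m \<ge> 1" for m
  proof -
    have "real m * measure M N \<le> real m * measure M {x\<in>space M. \<exists>j. real m \<le> U j x}"
      using integrable by (intro mult_left_mono finite_measure_mono) (auto simp: N_def)
    also have "\<dots> \<le> (\<integral>x. U 0 x \<partial>M)" by (rule maximal_ineq)
    finally show ?thesis using that by (simp add: field_simps)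
  qed
  then have "measure M N \<le> 0"
    by (intro LIMSEQ_le_const[OF lim_const_over_n]) auto
  then have "N \<in> null_sets M"
    using N by (simp add: emeasure_eq_measure null_sets_def measure_le_0_iff)
  then show ?thesis
    by (rule AE_I') (auto simp: N_def not_le intro: less_imp_le)
qed

end

section \<open>Almost-supermartingales\<close>

lemma (in finite_measure) set_integral_affine:
  fixes f :: "'a \<Rightarrow> real"
  assumes "A \<in> sets M" "integrable M f"
  shows "(\<integral>x\<in>A. c * f x + d \<partial>M) = c * (\<integral>x\<in>A. f x \<partial>M) + d * measure M A"
  using assms
  by (subst set_integral_add(2))
    (auto simp: set_integral_const integrable_mult_indicator[folded set_integrable_def])

lemma (in sigma_finite_subalgebra) set_integral_le_of_real_cond_exp_le:
  fixes f g :: "'a \<Rightarrow> real"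
  assumes f: "integrable M f" and g: "integrable M g"
    and le: "AE x in M. real_cond_exp M F f x \<le> g x" and A: "A \<in> sets F"
  shows "(\<integral>x\<in>A. f x \<partial>M) \<le> (\<integral>x\<in>A. g x \<partial>M)"
proof -
  have A_M: "A \<in> sets M" using A subalg by (auto simp: subalgebra_def)
  have "(\<integral>x\<in>A. f x \<partial>M) = (\<integral>x\<in>A. real_cond_exp M F f x \<partial>M)"
    by (rule real_cond_exp_intA[OF f A])
  also have "\<dots> \<le> (\<integral>x\<in>A. g x \<partial>M)"
    using A_M f g le
    by (intro set_integral_mono_AE integrable_mult_indicator[folded set_integrable_def]
        real_cond_exp_int(1)) auto
  finally show ?thesis .
qed

lemma weighted_almost_supermartingale:
  fixes F :: "nat \<Rightarrow> 'a measure" and V :: "nat \<Rightarrow> 'a \<Rightarrow> real" and q r c :: "nat \<Rightarrow> real"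
  assumes "prob_space M"
    and sub: "\<And>k. subalgebra M (F k)"
    and mono: "\<And>k. sets (F k) \<subseteq> sets (F (Suc k))"
    and adapted: "\<And>k. V k \<in> borel_measurable (F k)"
    and integ: "\<And>k. integrable M (V k)"
    and nonneg: "\<And>k x. x \<in> space M \<Longrightarrow> 0 \<le> V k x"
    and rec: "AE x in M. \<forall>k. real_cond_exp M (F k) (V (Suc k)) x \<le> q (Suc k) * V k x + r (Suc k)"
    and c_nonneg: "\<And>k. 0 \<le> c k" and r_nonneg: "\<And>k. 0 \<le> r k"
    and contraction: "\<And>k. c (Suc k) * q (Suc k) \<le> c k"
    and summable: "summable (\<lambda>k. c k * r k)"
  shows "nonneg_supermartingale M F (\<lambda>n x. c n * V n x + (\<Sum>j. c (j + Suc n) * r (j + Suc n)))"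
proof -
  interpret prob_space M by fact
  define d where "d n = (\<Sum>j. c (j + Suc n) * r (j + Suc n))" for n
  have d_nonneg: "0 \<le> d n" for n
    unfolding d_def using c_nonneg r_nonneg
    by (intro suminf_nonneg summable_ignore_initial_segment summable) auto
  have d_Suc: "d n = c (Suc n) * r (Suc n) + d (Suc n)" for n
    using suminf_split_head[OF summable_ignore_initial_segment[OF summable, of "Suc n"]]
    by (simp add: d_def)
  show ?thesis
    unfolding d_def[symmetric]
  proof unfold_locales
    fix n A assume A: "A \<in> sets (F n)"
    interpret finite_measure_subalgebra M "F n"
      by unfold_locales (rule sub)
    have A_M: "A \<in> sets M" using A sub by (auto simp: subalgebra_def)
    define I where "I = (\<integral>x\<in>A. V n x \<partial>M)"
    have I_nonneg: "0 \<le> I"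
      unfolding I_def set_lebesgue_integral_def
      by (intro integral_nonneg_AE) (auto simp: nonneg indicator_def)
    have "(\<integral>x\<in>A. V (Suc n) x \<partial>M) \<le> (\<integral>x\<in>A. q (Suc n) * V n x + r (Suc n) \<partial>M)"
    proof (rule set_integral_le_of_real_cond_exp_le[OF integ _ _ A])
      show "integrable M (\<lambda>x. q (Suc n) * V n x + r (Suc n))"
        by (intro Bochner_Integration.integrable_add integrable_mult_right integ integrable_const)
      show "AE x in M. real_cond_exp M (F n) (V (Suc n)) x \<le> q (Suc n) * V n x + r (Suc n)"
        using rec by eventually_elim blast
    qed
    also have "\<dots> = q (Suc n) * I + r (Suc n) * measure M A"
      unfolding I_def by (rule set_integral_affine[OF A_M integ])
    finally have step: "(\<integral>x\<in>A. V (Suc n) x \<partial>M) \<le> q (Suc n) * I + r (Suc n) * measure M A" .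
    have "(\<integral>x\<in>A. c (Suc n) * V (Suc n) x + d (Suc n) \<partial>M)
        = c (Suc n) * (\<integral>x\<in>A. V (Suc n) x \<partial>M) + d (Suc n) * measure M A"
      by (rule set_integral_affine[OF A_M integ])
    also have "\<dots> \<le> c (Suc n) * (q (Suc n) * I + r (Suc n) * measure M A) + d (Suc n) * measure M A"
      using step c_nonneg by (intro add_right_mono mult_left_mono) auto
    also have "\<dots> = (c (Suc n) * q (Suc n)) * I + d n * measure M A"
      using d_Suc[of n] by (simp add: algebra_simps)
    also have "\<dots> \<le> c n * I + d n * measure M A"
      using contraction I_nonneg by (intro add_right_mono mult_right_mono) auto
    also have "\<dots> = (\<integral>x\<in>A. c n * V n x + d n \<partial>M)"
      unfolding I_def by (rule set_integral_affine[OF A_M integ, symmetric])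
    finally show "(\<integral>x\<in>A. c (Suc n) * V (Suc n) x + d (Suc n) \<partial>M) \<le> (\<integral>x\<in>A. c n * V n x + d n \<partial>M)" .
  qed (use sub mono adapted integ nonneg c_nonneg d_nonneg in auto)
qed

lemma weighted_almost_supermartingale_bounded:
  fixes F :: "nat \<Rightarrow> 'a measure" and V :: "nat \<Rightarrow> 'a \<Rightarrow> real" and q r c :: "nat \<Rightarrow> real"
  assumes "prob_space M"
    and "\<And>k. subalgebra M (F k)"
    and "\<And>k. sets (F k) \<subseteq> sets (F (Suc k))"
    and "\<And>k. V k \<in> borel_measurable (F k)"
    and "\<And>k. integrable M (V k)"
    and "\<And>k x. x \<in> space M \<Longrightarrow> 0 \<le> V k x"
    and "AE x in M. \<forall>k. real_cond_exp M (F k) (V (Suc k)) x \<le> q (Suc k) * V k x + r (Suc k)"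
    and c_nonneg: "\<And>k. 0 \<le> c k" and r_nonneg: "\<And>k. 0 \<le> r k"
    and "\<And>k. c (Suc k) * q (Suc k) \<le> c k"
    and summable: "summable (\<lambda>k. c k * r k)"
  shows "AE x in M. \<exists>B. \<forall>n. c n * V n x \<le> B"
proof -
  interpret nonneg_supermartingale M F "\<lambda>n x. c n * V n x + (\<Sum>j. c (j + Suc n) * r (j + Suc n))"
    by (rule weighted_almost_supermartingale[OF assms])
  have tail_nonneg: "0 \<le> (\<Sum>j. c (j + Suc n) * r (j + Suc n))" for n
    using c_nonneg r_nonneg
    by (intro suminf_nonneg summable_ignore_initial_segment summable) auto
  show ?thesis
    using AE_bounded
  proof eventually_elim
    case (elim x)
    then obtain B where B: "\<And>n. c n * V n x + (\<Sum>j. c (j + Suc n) * r (j + Suc n)) \<le> B"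
      by blast
    have "c n * V n x \<le> B" for n
      using B[of n] tail_nonneg[of n] by linarith
    then show ?case by blast
  qed
qed

lemma normalized_weight_contraction:
  fixes \<rho> q \<epsilon> :: "nat \<Rightarrow> real"
  assumes "\<rho> (Suc k) * q (Suc k) \<le> \<rho> k * exp (\<epsilon> (Suc k))"
  shows "\<rho> (Suc k) * exp (- (\<Sum>j\<le>Suc k. \<epsilon> j)) * q (Suc k) \<le> \<rho> k * exp (- (\<Sum>j\<le>k. \<epsilon> j))"
proof -
  have "\<rho> (Suc k) * exp (- (\<Sum>j\<le>Suc k. \<epsilon> j)) * q (Suc k)
      = \<rho> (Suc k) * q (Suc k) * exp (- (\<Sum>j\<le>Suc k. \<epsilon> j))"
    by (simp add: ac_simps)
  also have "\<dots> \<le> \<rho> k * exp (\<epsilon> (Suc k)) * exp (- (\<Sum>j\<le>Suc k. \<epsilon> j))"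
    using assms by (intro mult_right_mono) auto
  also have "\<dots> = \<rho> k * exp (- (\<Sum>j\<le>k. \<epsilon> j))"
    by (simp add: mult.assoc exp_add[symmetric])
  finally show ?thesis .
qed

lemma almost_supermartingale_weighted_bound:
  fixes F :: "nat \<Rightarrow> 'a measure" and V :: "nat \<Rightarrow> 'a \<Rightarrow> real"
    and q r \<rho> \<epsilon> :: "nat \<Rightarrow> real" and K :: nat
  assumes "prob_space M"
    and sub: "\<And>k. subalgebra M (F k)"
    and mono: "\<And>k. sets (F k) \<subseteq> sets (F (Suc k))"
    and adapted: "\<And>k. V k \<in> borel_measurable (F k)"
    and integ: "\<And>k. integrable M (V k)"
    and nonneg: "\<And>k x. x \<in> space M \<Longrightarrow> 0 \<le> V k x"
    and rec: "AE x in M. \<forall>k. real_cond_exp M (F k) (V (Suc k)) x \<le> q (Suc k) * V k x + r (Suc k)"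
    and r_nonneg: "\<And>k. 0 \<le> r k"
    and \<rho>_pos: "\<And>k. K \<le> k \<Longrightarrow> 0 < \<rho> k"
    and \<epsilon>_nonneg: "\<And>k. 0 \<le> \<epsilon> k" and \<epsilon>_summable: "summable \<epsilon>"
    and contraction: "\<And>k. K \<le> k \<Longrightarrow> \<rho> (Suc k) * q (Suc k) \<le> \<rho> k * exp (\<epsilon> (Suc k))"
    and summable: "summable (\<lambda>k. \<rho> k * r k)"
  shows "AE x in M. \<exists>B. \<forall>k\<ge>K. \<rho> k * V k x \<le> B"
proof -
  define E where "E k = (\<Sum>j\<le>k. \<epsilon> j)" for k
  define c where "c n = \<rho> (K + n) * exp (- E (K + n))" for n
  have E_bounds: "0 \<le> E k" "E k \<le> suminf \<epsilon>" for k
    using \<epsilon>_nonneg unfolding E_def by (auto intro: sum_nonneg sum_le_suminf[OF \<epsilon>_summable])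
  have c_nonneg: "0 \<le> c n" and c_le: "c n \<le> \<rho> (K + n)" for n
    using \<rho>_pos[of "K + n"] E_bounds[of "K + n"] by (auto simp: c_def intro: mult_left_le)
  have "AE x in M. \<exists>B. \<forall>n. c n * V (K + n) x \<le> B"
  proof (rule weighted_almost_supermartingale_bounded[where q = "\<lambda>n. q (K + n)" and r = "\<lambda>n. r (K + n)"])
    show "AE x in M. \<forall>n. real_cond_exp M (F (K + n)) (V (K + Suc n)) x
        \<le> q (K + Suc n) * V (K + n) x + r (K + Suc n)"
      using rec by eventually_elim simp
    show "c (Suc n) * q (K + Suc n) \<le> c n" for n
      using normalized_weight_contraction[where \<rho> = \<rho> and q = q and \<epsilon> = \<epsilon>, OF contraction[OF le_add1]]
      by (simp add: c_def E_def)
    show "summable (\<lambda>n. c n * r (K + n))"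
    proof (rule summable_comparison_test')
      show "summable (\<lambda>n. \<rho> (n + K) * r (n + K))"
        by (rule summable_ignore_initial_segment[OF summable])
      show "norm (c n * r (K + n)) \<le> \<rho> (n + K) * r (n + K)" for n
        using c_le[of n] c_nonneg[of n] r_nonneg[of "K + n"]
        by (simp add: add.commute mult_right_mono)
    qed
  qed (use assms(1) sub mono adapted integ nonneg c_nonneg r_nonneg in auto)
  then show ?thesis
  proof eventually_elim
    case (elim x)
    then obtain B where B: "\<And>n. c n * V (K + n) x \<le> B" by blast
    have "\<rho> k * V k x \<le> exp (suminf \<epsilon>) * max B 0" if "K \<le> k" for k
    proof -
      have "\<rho> k * V k x = exp (E k) * (c (k - K) * V k x)"
        using that by (simp add: c_def exp_minus field_simps)
      also have "\<dots> \<le> exp (E k) * max B 0"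
        using B[of "k - K"] that by (intro mult_left_mono) auto
      also have "\<dots> \<le> exp (suminf \<epsilon>) * max B 0"
        using E_bounds by (intro mult_right_mono) auto
      finally show ?thesis .
    qed
    then show ?case by blast
  qed
qed

section \<open>Deterministic estimates\<close>

lemma Suc_powr_mult_one_minus_le:
  fixes s :: real and k :: nat
  assumes s: "0 < s" and k: "1 \<le> k"
  shows "real (Suc k) powr s * (1 - s / real (Suc k)) \<le> real k powr s * exp (2 * s / real (Suc k) ^ 2)"
proof -
  define x where "x = 1 / real (Suc k)"
  have x: "0 \<le> x" "x \<le> 1 / 2" using k by (auto simp: x_def field_simps)
  have k_eq: "real k = real (Suc k) * (1 - x)" by (simp add: x_def field_simps)
  have "exp (- s * x - 2 * s * x\<^sup>2) \<le> exp (s * ln (1 - x))"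
    using mult_left_mono[OF ln_one_minus_pos_lower_bound[OF x], of s] s by (simp add: algebra_simps)
  also have "\<dots> = (1 - x) powr s" using x by (simp add: powr_def)
  finally have ln_bound: "exp (- s * x - 2 * s * x\<^sup>2) \<le> (1 - x) powr s" .
  have "real (Suc k) powr s * (1 - s / real (Suc k)) = real (Suc k) powr s * (1 - s * x)"
    by (simp add: x_def)
  also have "\<dots> \<le> real (Suc k) powr s * exp (- s * x)"
    using exp_ge_add_one_self[of "- s * x"] by (intro mult_left_mono) auto
  also have "\<dots> = real (Suc k) powr s * exp (- s * x - 2 * s * x\<^sup>2) * exp (2 * s * x\<^sup>2)"
    by (simp add: mult.assoc exp_add[symmetric])
  also have "\<dots> \<le> real (Suc k) powr s * (1 - x) powr s * exp (2 * s * x\<^sup>2)"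
    using ln_bound by (intro mult_right_mono mult_left_mono) auto
  also have "\<dots> = real k powr s * exp (2 * s / real (Suc k) ^ 2)"
  proof -
    have "real k powr s = real (Suc k) powr s * (1 - x) powr s"
      unfolding k_eq using x by (simp add: powr_mult)
    moreover have "2 * s * x\<^sup>2 = 2 * s / real (Suc k) ^ 2"
      by (simp add: x_def power_divide)
    ultimately show ?thesis by simp
  qed
  finally show ?thesis .
qed

lemma power_weight_contraction:
  fixes L :: "nat \<Rightarrow> real" and s a g :: real and k :: nat
  assumes s: "0 < s" "s \<le> a" and g: "0 \<le> g" and k: "1 \<le> k"
    and L: "0 < L k" "L k \<le> L (Suc k)"
  shows "real (Suc k) powr s / L (Suc k) * (1 - a / real (Suc k) + g)
    \<le> real k powr s / L k * exp (2 * s / real (Suc k) ^ 2 + 2 powr s * g)"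
proof -
  define \<rho>' \<rho> \<delta> where "\<rho>' = real (Suc k) powr s / L (Suc k)" and "\<rho> = real k powr s / L k"
    and "\<delta> = 2 * s / real (Suc k) ^ 2"
  have \<rho>_nonneg: "0 \<le> \<rho>" using L by (simp add: \<rho>_def)
  have "\<rho>' * (1 - a / real (Suc k)) \<le> \<rho>' * (1 - s / real (Suc k))"
    using s L by (intro mult_left_mono) (auto simp: \<rho>'_def divide_right_mono)
  also have "\<dots> = real (Suc k) powr s * (1 - s / real (Suc k)) / L (Suc k)"
    by (simp add: \<rho>'_def)
  also have "\<dots> \<le> real k powr s * exp \<delta> / L (Suc k)"
    using Suc_powr_mult_one_minus_le[OF s(1) k] L by (simp add: \<delta>_def divide_right_mono)
  also have "\<dots> \<le> \<rho> * exp \<delta>"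
    using L by (simp add: \<rho>_def divide_left_mono)
  finally have main: "\<rho>' * (1 - a / real (Suc k)) \<le> \<rho> * exp \<delta>" .
  have "real (Suc k) powr s \<le> (2 * real k) powr s"
    using s k by (intro powr_mono2) auto
  then have "\<rho>' \<le> 2 powr s * real k powr s / L (Suc k)"
    using L by (simp add: \<rho>'_def powr_mult divide_right_mono)
  also have "\<dots> \<le> 2 powr s * \<rho>"
    using L by (simp add: \<rho>_def divide_left_mono)
  finally have growth: "\<rho>' \<le> 2 powr s * \<rho>" .
  have one_le_exp: "1 \<le> exp \<delta>" using s by (simp add: \<delta>_def)
  have "\<rho>' * (1 - a / real (Suc k) + g) = \<rho>' * (1 - a / real (Suc k)) + \<rho>' * g"
    by (simp add: algebra_simps)
  also have "\<dots> \<le> \<rho> * exp \<delta> + 2 powr s * \<rho> * g"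
    using main growth g by (intro add_mono mult_right_mono) auto
  also have "\<dots> \<le> \<rho> * exp \<delta> * (1 + 2 powr s * g)"
    using mult_left_mono[OF one_le_exp, of "2 powr s * \<rho> * g"] \<rho>_nonneg g s
    by (simp add: algebra_simps \<delta>_def)
  also have "\<dots> \<le> \<rho> * exp \<delta> * exp (2 powr s * g)"
    using \<rho>_nonneg exp_ge_add_one_self[of "2 powr s * g"] by (intro mult_left_mono) auto
  finally show ?thesis by (simp add: \<rho>'_def \<rho>_def \<delta>_def exp_add mult.assoc)
qed

lemma summable_inverse_mult_ln_squared: "summable (\<lambda>k. 1 / (real k * ln (real k) ^ 2))"
proof -
  define f where "f n = 1 / (max (real n) 2 * ln (max (real n) 2) ^ 2)" for n :: nat
  have ln_max_pos: "0 < ln (max (real n) 2)" for n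
    by (simp add: max_def)
  have f_pos: "0 < f n" for n
    using ln_max_pos[of n] by (simp add: f_def)
  have "summable (\<lambda>n. 2 ^ n * f (2 ^ n))"
  proof (rule summable_comparison_test')
    show "summable (\<lambda>n. 1 / ln 2 ^ 2 * inverse (real n ^ 2))"
      by (intro summable_mult inverse_power_summable) auto
    show "norm (2 ^ n * f (2 ^ n)) \<le> 1 / ln 2 ^ 2 * inverse (real n ^ 2)" if "1 \<le> n" for n
    proof -
      have "(2::real) ^ 1 \<le> 2 ^ n" using that by (intro power_increasing) auto
      then have "max (real (2 ^ n)) 2 = 2 ^ n" by (simp add: max_def)
      then have "2 ^ n * f (2 ^ n) = 1 / ln (2 ^ n) ^ 2" by (simp add: f_def)
      also have "\<dots> = 1 / ln 2 ^ 2 * inverse (real n ^ 2)"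
        by (simp add: ln_realpow power_mult_distrib divide_inverse)
      finally show ?thesis using f_pos[of "2 ^ n"] by simp
    qed
  qed
  moreover have "f (Suc m) \<le> f m" for m
  proof -
    have le: "max (real m) 2 \<le> max (real (Suc m)) 2" by simp
    then have "ln (max (real m) 2) \<le> ln (max (real (Suc m)) 2)" by simp
    then have "max (real m) 2 * ln (max (real m) 2) ^ 2 \<le> max (real (Suc m)) 2 * ln (max (real (Suc m)) 2) ^ 2"
      using le ln_max_pos[of m] by (intro mult_mono power_mono) auto
    then show ?thesis
      using ln_max_pos[of m] unfolding f_def by (intro divide_left_mono) auto
  qed
  ultimately have "summable f"
    using condensation_test[of f] f_pos by (simp add: less_imp_le)
  moreover have "eventually (\<lambda>n. f n = 1 / (real n * ln (real n) ^ 2)) sequentially"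
    using eventually_ge_at_top[of 2] by eventually_elim (simp add: f_def max_def)
  ultimately show ?thesis by (simp add: summable_cong)
qed

lemma bigo_inverse_of_weighted_bound:
  fixes f \<rho> :: "nat \<Rightarrow> real"
  assumes "\<And>k. K \<le> k \<Longrightarrow> 0 < \<rho> k" and "\<And>k. K \<le> k \<Longrightarrow> 0 \<le> f k"
    and "\<And>k. K \<le> k \<Longrightarrow> \<rho> k * f k \<le> B"
  shows "f \<in> O(\<lambda>k. 1 / \<rho> k)"
proof (intro bigoI[of _ "\<bar>B\<bar>"] eventually_mono[OF eventually_ge_at_top[of K]])
  fix k assume k: "K \<le> k"
  have "f k \<le> B * (1 / \<rho> k)"
    using assms[OF k] by (simp add: field_simps)
  also have "\<dots> \<le> \<bar>B\<bar> * (1 / \<rho> k)"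
    using assms(1)[OF k] by (intro mult_right_mono) auto
  finally show "norm (f k) \<le> \<bar>B\<bar> * norm (1 / \<rho> k)"
    using assms(1,2)[OF k] by simp
qed

section \<open>Convergence rates\<close>

lemma almost_supermartingale_rate:
  fixes F :: "nat \<Rightarrow> 'a measure" and V :: "nat \<Rightarrow> 'a \<Rightarrow> real"
    and \<gamma> L :: "nat \<Rightarrow> real" and a b C s :: real and K :: nat
  assumes "prob_space M"
    and sub: "\<And>k. subalgebra M (F k)"
    and mono: "\<And>k. sets (F k) \<subseteq> sets (F (Suc k))"
    and adapted: "\<And>k. V k \<in> borel_measurable (F k)"
    and integ: "\<And>k. integrable M (V k)"
    and nonneg: "\<And>k x. x \<in> space M \<Longrightarrow> 0 \<le> V k x"
    and rec: "AE x in M. \<forall>k\<ge>1. real_cond_exp M (F (k - 1)) (V k) x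
               \<le> (1 - a / real k + \<gamma> k) * V (k - 1) x + C / real k powr b"
    and s: "0 < s" "s \<le> a" and C: "0 \<le> C"
    and \<gamma>_nonneg: "\<And>k. 0 \<le> \<gamma> k" and \<gamma>_summable: "summable \<gamma>"
    and K: "1 \<le> K" and L_pos: "\<And>k. K \<le> k \<Longrightarrow> 0 < L k"
    and L_mono: "\<And>k. K \<le> k \<Longrightarrow> L k \<le> L (Suc k)"
    and summable: "summable (\<lambda>k. real k powr s / L k / real k powr b)"
  shows "AE x in M. (\<lambda>k. V k x) \<in> O(\<lambda>k. L k / real k powr s)"
proof -
  have rec_Suc: "AE x in M. \<forall>k. real_cond_exp M (F k) (V (Suc k)) x
      \<le> (1 - a / real (Suc k) + \<gamma> (Suc k)) * V k x + C / real (Suc k) powr b"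
    using rec by eventually_elim (auto dest: spec[where x = "Suc k" for k])
  have "AE x in M. \<exists>B. \<forall>k\<ge>K. real k powr s / L k * V k x \<le> B"
  proof (rule almost_supermartingale_weighted_bound[OF assms(1) sub mono adapted integ nonneg rec_Suc])
    show "summable (\<lambda>k. 2 * s / real k ^ 2 + 2 powr s * \<gamma> k)"
      using inverse_power_summable[of 2, where 'a = real]
      by (intro summable_add summable_mult \<gamma>_summable) (simp add: divide_inverse summable_mult)
    show "real (Suc k) powr s / L (Suc k) * (1 - a / real (Suc k) + \<gamma> (Suc k))
        \<le> real k powr s / L k * exp (2 * s / real (Suc k) ^ 2 + 2 powr s * \<gamma> (Suc k))"
      if "K \<le> k" for k
      using that K L_pos L_mono \<gamma>_nonneg s by (intro power_weight_contraction) auto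
    show "summable (\<lambda>k. real k powr s / L k * (C / real k powr b))"
      using summable_mult[OF summable, of C] by (simp add: ac_simps)
  qed (use s C K L_pos \<gamma>_nonneg in auto)
  then show ?thesis
    using AE_space
  proof eventually_elim
    case (elim x)
    then obtain B where "\<And>k. K \<le> k \<Longrightarrow> real k powr s / L k * V k x \<le> B" by blast
    with K L_pos nonneg[OF \<open>x \<in> space M\<close>]
    have "(\<lambda>k. V k x) \<in> O(\<lambda>k. 1 / (real k powr s / L k))"
      by (intro bigo_inverse_of_weighted_bound[where K = K]) auto
    then show ?case by simp
  qed
qed

theorem lemmaA9:
  fixes M :: "'w measure" and F :: "nat \<Rightarrow> 'w measure"
    and V :: "nat \<Rightarrow> 'w \<Rightarrow> real" and \<gamma> :: "nat \<Rightarrow> real"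
    and a b C :: real
  assumes "prob_space M"
    and sub: "\<And>k. subalgebra M (F k)"
    and mono: "\<And>k. sets (F k) \<subseteq> sets (F (Suc k))"
    and adapted: "\<And>k. V k \<in> borel_measurable (F k)"
    and integ: "\<And>k. integrable M (V k)"
    and nonneg: "\<And>k x. x \<in> space M \<Longrightarrow> V k x \<ge> 0"
    and a: "a > 0" and b: "b > 1" and C: "C > 0"
    and gamma_nonneg: "\<And>k. \<gamma> k \<ge> 0" and gamma_sum: "summable \<gamma>"
    and rec: "AE x in M. \<forall>k\<ge>1. real_cond_exp M (F (k - 1)) (V k) x
               \<le> (1 - a / real k + \<gamma> k) * V (k - 1) x + C / real k powr b"
  shows "(b - a > 1 \<longrightarrow> (AE x in M. (\<lambda>k. V k x) \<in> O(\<lambda>k. real k powr (- a))))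
       \<and> (b - a \<le> 1 \<longrightarrow> (AE x in M. (\<lambda>k. V k x) \<in> O(\<lambda>k. (ln (real k))\<^sup>2 / real k powr (b - 1))))"
proof -
  note rate = almost_supermartingale_rate[OF assms(1) sub mono adapted integ nonneg rec]
  show ?thesis
  proof (intro conjI impI)
    assume "b - a > 1"
    then have "summable (\<lambda>k. real k powr a / 1 / real k powr b)"
      by (simp add: powr_diff[symmetric] summable_real_powr_iff)
    with rate[where s = a and K = 1 and L = "\<lambda>_. 1"] a C gamma_nonneg gamma_sum
    show "AE x in M. (\<lambda>k. V k x) \<in> O(\<lambda>k. real k powr (- a))"
      by (simp add: powr_minus_divide)
  next
    assume "b - a \<le> 1"
    have "real k powr (b - 1) / ln (real k) ^ 2 / real k powr b = 1 / (real k * ln (real k) ^ 2)"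
      for k
      by (cases "k = 0") (simp_all add: powr_diff)
    with summable_inverse_mult_ln_squared
    have "summable (\<lambda>k. real k powr (b - 1) / ln (real k) ^ 2 / real k powr b)"
      by simp
    with rate[where s = "b - 1" and K = 2 and L = "\<lambda>k. ln (real k) ^ 2"] b C gamma_nonneg gamma_sum
      \<open>b - a \<le> 1\<close>
    show "AE x in M. (\<lambda>k. V k x) \<in> O(\<lambda>k. (ln (real k))\<^sup>2 / real k powr (b - 1))"
      by simp
  qed
qed

end
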